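(* Let $p\in\mathbb{R}$, $K:=\{z=(v,m,\sigma,e)\in Z: v\otimes v-\sigma=e\,\mathrm{Id},\ m=(e+p)v\}$, and let $K'\subset K$ be compact. For any $z\in\operatorname{int}(K')^{co}$ there exists $\bar z\in\Lambda$ such that $[z-\bar z,z+\bar z]\subset\operatorname{int}(K')^{co}$ and $|\bar z|\ge\frac{1}{2N}d(z,K')$, where $N=\dim Z$.
   Context: $\mathcal S_0^{2\times2}$ is the space of traceless symmetric $2\times2$ matrices, $Z:=\mathbb{R}^2\times\mathbb{R}^2\times\mathcal S_0^{2\times2}\times\mathbb{R}$, $d$ is the Euclidean distance on $Z$, $(K')^{co}$ the convex hull. The wave cone is $\Lambda=\{\bar z=(\bar v,\bar m,\bar\sigma,\bar e)\in Z:\ (\bar v,\bar e)\neq0\text{ and there is }0\ne(\xi,c)\in\mathbb{R}^2\times\mathbb{R}\text{ with }(\bar\sigma+\bar e\,\mathrm{Id})\xi+c\bar v=0,\ \bar v\cdot\xi=0,\ \bar m\cdot\xi+c\bar e=0\}$. *)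

theory Defs
  imports "HOL-Analysis.Analysis"
begin

text \<open>Ambient space: (v, m, sigma, e) with v, m in R^2, sigma a 2x2 real matrix, e real.
  The product norm is Euclidean (Frobenius on the matrix component).\<close>
type_synonym Zamb = "(real^2) \<times> (real^2) \<times> (real^2^2) \<times> real"

definition Zset :: "Zamb set" where
  "Zset = {(v, m, \<sigma>, e). transpose \<sigma> = \<sigma> \<and> trace \<sigma> = 0}"

definition outer :: "real^2 \<Rightarrow> real^2 \<Rightarrow> real^2^2" where
  "outer a b = (\<chi> i j. a $ i * b $ j)"

definition Kset :: "real \<Rightarrow> Zamb set" where
  "Kset p = {(v, m, \<sigma>, e). (v, m, \<sigma>, e) \<in> Zset \<and>
      outer v v - \<sigma> = e *\<^sub>R mat 1 \<and> m = (e + p) *\<^sub>R v}"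

definition wave_cone :: "Zamb set" where
  "wave_cone = {(v, m, \<sigma>, e). (v, m, \<sigma>, e) \<in> Zset \<and> (v, e) \<noteq> 0 \<and>
      (\<exists>(\<xi>::real^2) (c::real). (\<xi>, c) \<noteq> 0 \<and>
         (\<sigma> + e *\<^sub>R mat 1) *v \<xi> + c *\<^sub>R v = 0 \<and> v \<bullet> \<xi> = 0 \<and> m \<bullet> \<xi> + c * e = 0)}"

end

theory Submission
  imports Defs
begin

(* By Caratheodory, z is a convex combination of at most N + 1 points of K'. Let a be a point
   of largest weight and j maximise u x * |x - a|. Then d(z, K') <= |z - a| <= N u_j |j - a|,
   and moving weight between a and j shows that z +- u_j (j - a) stays in the convex hull.
   Since z is a relative interior point, the half-length segment lies in the relative interior,
   which coincides with the interior relative to Z. Finally, differences of points of K lie in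
   the wave cone, because sigma + e Id = v (x) v on K. *)

lemma affine_hull_eq_if_interior_of_nonempty:
  fixes C :: "'a::real_normed_vector set"
  assumes "affine V" and "C \<subseteq> V" and "(top_of_set V) interior_of C \<noteq> {}"
  shows "affine hull C = V"
proof -
  obtain T where T: "openin (top_of_set V) T" "T \<noteq> {}" "T \<subseteq> C"
    using assms(3) unfolding interior_of_def by blast
  have hull_V: "affine hull V = V"
    using assms(1) by (rule affine_hull_eq[THEN iffD2])
  have "V = affine hull T"
    using affine_hull_openin[where S = T and T = V] T(1,2) by (simp add: hull_V)
  also have "\<dots> \<subseteq> affine hull C"
    using T(3) by (rule hull_mono)
  finally show ?thesis
    using hull_minimal[OF assms(2), of affine] assms(1) by blast
qed

lemma interior_of_eq_rel_interior:
  fixes C :: "'a::real_normed_vector set"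
  assumes "affine V" and "C \<subseteq> V" and "(top_of_set V) interior_of C \<noteq> {}"
  shows "(top_of_set V) interior_of C = rel_interior C"
  using affine_hull_eq_if_interior_of_nonempty[OF assms]
  by (simp add: rel_interior_def interior_of_def)

lemma closed_segment_subset_rel_interior:
  fixes z w :: "'a::euclidean_space"
  assumes "convex C" and "z \<in> rel_interior C"
    and "z - 2 *\<^sub>R w \<in> C" and "z + 2 *\<^sub>R w \<in> C"
  shows "closed_segment (z - w) (z + w) \<subseteq> rel_interior C"
proof -
  have minus: "z - w = (z - 2 *\<^sub>R w) - (1/2) *\<^sub>R ((z - 2 *\<^sub>R w) - z)"
    and plus: "z + w = (z + 2 *\<^sub>R w) - (1/2) *\<^sub>R ((z + 2 *\<^sub>R w) - z)"
    by (simp_all add: algebra_simps) (simp_all add: scaleR_2)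
  have "z - w \<in> rel_interior C"
    using rel_interior_convex_shrink[OF assms(1,2,3), of "1/2", folded minus] by simp
  moreover have "z + w \<in> rel_interior C"
    using rel_interior_convex_shrink[OF assms(1,2,4), of "1/2", folded plus] by simp
  ultimately show ?thesis
    using convex_rel_interior[OF assms(1)] by (simp add: closed_segment_subset)
qed

lemma rel_interior_segment_in_direction:
  fixes z :: "'a::euclidean_space"
  assumes "z \<in> rel_interior C" and "b \<in> C" and "c \<in> C"
  obtains \<epsilon> where "\<epsilon> > 0" "\<And>s. \<bar>s\<bar> \<le> \<epsilon> \<Longrightarrow> z + s *\<^sub>R (c - b) \<in> C"
proof -
  obtain e where e: "e > 0" "cball z e \<inter> affine hull C \<subseteq> C"
    using assms(1) unfolding mem_rel_interior_cball by blast
  define \<epsilon> where "\<epsilon> = e / (norm (c - b) + 1)"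
  have "z + s *\<^sub>R (c - b) \<in> C" if s: "\<bar>s\<bar> \<le> \<epsilon>" for s
  proof -
    have "norm (s *\<^sub>R (c - b)) \<le> \<epsilon> * (norm (c - b) + 1)"
      using s by (simp add: mult_mono)
    also have "\<epsilon> * (norm (c - b) + 1) = e"
      using norm_ge_zero[of "c - b"] unfolding \<epsilon>_def by (simp add: add_nonneg_eq_0_iff)
    finally have "z + s *\<^sub>R (c - b) \<in> cball z e"
      by (simp add: dist_norm)
    moreover have "z + s *\<^sub>R (c - b) \<in> affine hull C"
      using assms rel_interior_subset hull_subset
      by (metis affine_affine_hull mem_affine_3_minus subsetD)
    ultimately show ?thesis using e(2) by blast
  qed
  moreover have "\<epsilon> > 0"
    using e(1) norm_ge_zero[of "c - b"] unfolding \<epsilon>_def by (simp add: add_nonneg_pos)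
  ultimately show ?thesis using that by blast
qed

lemma convex_combination_heaviest_pair:
  fixes S :: "'a::real_normed_vector set"
  assumes S: "finite S" and u: "\<forall>x\<in>S. 0 \<le> u x" "sum u S = 1" "(\<Sum>x\<in>S. u x *\<^sub>R x) = z"
  obtains a j where "a \<in> S" "j \<in> S" "u j \<le> u a"
    "norm (z - a) \<le> real (card S - 1) * (u j * norm (j - a))"
proof -
  have "S \<noteq> {}" using u(2) by auto
  obtain a where a: "a \<in> S" "Max (u ` S) = u a"
    using obtains_MAX[OF S \<open>S \<noteq> {}\<close>] by blast
  have a_max: "u x \<le> u a" if "x \<in> S" for x
    using a(2) S that by (metis Max_ge finite_imageI imageI)
  define f where "f x = u x * norm (x - a)" for x
  obtain j where j: "j \<in> S" "Max (f ` S) = f j"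
    using obtains_MAX[OF S \<open>S \<noteq> {}\<close>] by blast
  have j_max: "f x \<le> f j" if "x \<in> S" for x
    using j(2) S that by (metis Max_ge finite_imageI imageI)
  have "z - a = (\<Sum>x\<in>S. u x *\<^sub>R (x - a))"
    using u(2,3) by (simp add: scaleR_diff_right sum_subtractf flip: scaleR_sum_left)
  then have "norm (z - a) \<le> (\<Sum>x\<in>S. f x)"
    using u(1) norm_sum[of "\<lambda>x. u x *\<^sub>R (x - a)" S] by (simp add: f_def)
  also have "\<dots> = (\<Sum>x\<in>S - {a}. f x)"
    using sum.remove[OF S a(1), of f] by (simp add: f_def)
  also have "\<dots> \<le> real (card (S - {a})) * f j"
    using j_max by (intro sum_bounded_above) auto
  also have "\<dots> = real (card S - 1) * f j"
    using S a(1) by simp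
  finally show ?thesis
    using that a(1) j(1) a_max by (simp add: f_def)
qed

lemma convex_combination_move_weight:
  fixes S :: "'a::real_vector set"
  assumes S: "finite S" and u: "\<forall>x\<in>S. 0 \<le> u x" "sum u S = 1" "(\<Sum>x\<in>S. u x *\<^sub>R x) = z"
    and "a \<in> S" "j \<in> S" "- u j \<le> c" "c \<le> u a"
  shows "z + c *\<^sub>R (j - a) \<in> convex hull S"
proof (cases "a = j")
  case True
  then show ?thesis
    using assms unfolding convex_hull_finite[OF S] by auto
next
  case False
  define u' where "u' x = u x + (if x = j then c else 0) - (if x = a then c else 0)" for x
  have "\<forall>x\<in>S. 0 \<le> u' x"
    using u(1) assms(7,8) False by (auto simp: u'_def)
  moreover have "sum u' S = 1"
    using u(2) S assms(5,6) by (simp add: u'_def sum.distrib sum_subtractf)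
  moreover have "(\<Sum>x\<in>S. u' x *\<^sub>R x) = z + c *\<^sub>R (j - a)"
    using u(3) S assms(5,6)
    by (simp add: u'_def scaleR_add_left scaleR_diff_left sum.distrib sum_subtractf
        if_distrib[of "\<lambda>t. t *\<^sub>R _"] scaleR_diff_right cong: if_cong)
  ultimately show ?thesis
    unfolding convex_hull_finite[OF S] by blast
qed

lemma convex_hull_segment_from_heaviest_pair:
  fixes K :: "'a::euclidean_space set"
  assumes "z \<in> convex hull K"
  obtains a j t where "a \<in> K" "j \<in> K" "0 \<le> t"
    "z - t *\<^sub>R (j - a) \<in> convex hull K" "z + t *\<^sub>R (j - a) \<in> convex hull K"
    "norm (z - a) \<le> of_int (aff_dim K) * (t * norm (j - a))"
proof -
  obtain S where S: "finite S" "S \<subseteq> K" "card S \<le> aff_dim K + 1" "z \<in> convex hull S"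
    using assms unfolding caratheodory_aff_dim[of K] by blast
  obtain u where u: "\<forall>x\<in>S. 0 \<le> u x" "sum u S = 1" "(\<Sum>x\<in>S. u x *\<^sub>R x) = z"
    using S(4) unfolding convex_hull_finite[OF S(1)] by blast
  obtain a j where a: "a \<in> S" and j: "j \<in> S" and "u j \<le> u a"
    and dist: "norm (z - a) \<le> real (card S - 1) * (u j * norm (j - a))"
    using convex_combination_heaviest_pair[OF S(1) u] by blast
  have "0 \<le> u j"
    using u(1) j by blast
  have move: "z + c *\<^sub>R (j - a) \<in> convex hull K" if "- u j \<le> c" "c \<le> u a" for c
    using convex_combination_move_weight[OF S(1) u a j that] hull_mono[OF S(2)] by blast
  have "0 < card S"
    using S(1) a card_gt_0_iff by blast
  then have "int (card S - 1) \<le> aff_dim K"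
    using S(3) by linarith
  then have "real (card S - 1) \<le> of_int (aff_dim K)"
    by (metis of_int_le_iff of_int_of_nat_eq)
  then have "norm (z - a) \<le> of_int (aff_dim K) * (u j * norm (j - a))"
    using dist \<open>0 \<le> u j\<close> by (meson mult_right_mono order_trans mult_nonneg_nonneg norm_ge_zero)
  moreover have "z - u j *\<^sub>R (j - a) \<in> convex hull K"
    using move[of "- u j"] \<open>0 \<le> u j\<close> \<open>u j \<le> u a\<close> by simp
  moreover have "z + u j *\<^sub>R (j - a) \<in> convex hull K"
    using move[of "u j"] \<open>0 \<le> u j\<close> \<open>u j \<le> u a\<close> by simp
  ultimately show ?thesis
    using that a j S(2) \<open>0 \<le> u j\<close> by blast
qed

lemma subspace_Zset: "subspace Zset"
  unfolding subspace_def Zset_def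
  by (auto simp: transpose_def vec_eq_iff trace_def zero_prod_def sum.distrib simp flip: sum_distrib_left)

lemma Zset_not_subset_singleton: "\<not> Zset \<subseteq> {b}"
proof -
  have "(0, 0, 0, 1) \<in> Zset" "0 \<in> Zset" "(0, 0, 0, 1) \<noteq> (0 :: Zamb)"
    by (simp_all add: Zset_def zero_prod_def transpose_def trace_def vec_eq_iff)
  then show ?thesis by blast
qed

lemma dim_Zset_pos: "0 < dim Zset"
  using Zset_not_subset_singleton[of 0] by (simp add: zero_less_iff_neq_zero)

lemma Kset_subset_Zset: "Kset p \<subseteq> Zset"
  by (auto simp: Kset_def)

lemma outer_mult_vec: "outer a b *v x = (b \<bullet> x) *\<^sub>R a"
  by (simp add: outer_def matrix_vector_mult_def inner_vec_def vec_eq_iff sum_distrib_left algebra_simps)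

lemma Kset_iff:
  "(v, m, \<sigma>, e) \<in> Kset p \<longleftrightarrow>
     e = (v \<bullet> v) / 2 \<and> \<sigma> = outer v v - e *\<^sub>R mat 1 \<and> m = (e + p) *\<^sub>R v"
  by (auto simp: Kset_def Zset_def vec_eq_iff forall_2 transpose_def trace_def sum_2 outer_def
      inner_vec_def mat_def algebra_simps)

lemma inj_on_fst_Kset: "inj_on fst (Kset p)"
  by (rule inj_onI) (auto simp: Kset_iff)

lemma wave_cone_scaleR:
  assumes "zb \<in> wave_cone" and "t \<noteq> 0"
  shows "t *\<^sub>R zb \<in> wave_cone"
proof -
  obtain v m \<sigma> e where zb: "zb = (v, m, \<sigma>, e)" by (cases zb)
  obtain \<xi> c where "(\<xi>, c) \<noteq> 0" and \<sigma>: "(\<sigma> + e *\<^sub>R mat 1) *v \<xi> + c *\<^sub>R v = 0"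
    and v: "v \<bullet> \<xi> = 0" and m: "m \<bullet> \<xi> + c * e = 0"
    using assms(1) by (auto simp: wave_cone_def zb)
  have "zb \<in> Zset"
    using assms(1) by (simp add: wave_cone_def zb)
  then have "t *\<^sub>R zb \<in> Zset"
    by (rule subspace_scale[OF subspace_Zset])
  moreover have "(t *\<^sub>R v, t * e) \<noteq> 0"
    using assms by (auto simp: wave_cone_def zb zero_prod_def)
  moreover have "(t *\<^sub>R \<sigma> + (t * e) *\<^sub>R mat 1) *v \<xi> + c *\<^sub>R t *\<^sub>R v
      = t *\<^sub>R ((\<sigma> + e *\<^sub>R mat 1) *v \<xi> + c *\<^sub>R v)"
    by (simp add: scaleR_add_right scaleR_matrix_vector_assoc mult.commute)
  moreover have "t *\<^sub>R m \<bullet> \<xi> + c * (t * e) = t * (m \<bullet> \<xi> + c * e)"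
    by (simp add: algebra_simps)
  ultimately show ?thesis
    using \<open>(\<xi>, c) \<noteq> 0\<close> \<sigma> v m unfolding wave_cone_def zb
    by (auto intro!: exI[of _ \<xi>] exI[of _ c])
qed

lemma Kset_diff_in_wave_cone:
  assumes a: "a \<in> Kset p" and b: "b \<in> Kset p" and "a \<noteq> b"
  shows "b - a \<in> wave_cone"
proof -
  obtain v1 m1 \<sigma>1 e1 where a_eq: "a = (v1, m1, \<sigma>1, e1)" by (cases a)
  obtain v2 m2 \<sigma>2 e2 where b_eq: "b = (v2, m2, \<sigma>2, e2)" by (cases b)
  have \<sigma>1: "\<sigma>1 + e1 *\<^sub>R mat 1 = outer v1 v1" and m1: "m1 = (e1 + p) *\<^sub>R v1"
    using a by (auto simp: a_eq Kset_iff)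
  have \<sigma>2: "\<sigma>2 + e2 *\<^sub>R mat 1 = outer v2 v2" and m2: "m2 = (e2 + p) *\<^sub>R v2"
    using b by (auto simp: b_eq Kset_iff)
  have "fst a \<noteq> fst b"
    using inj_onD[OF inj_on_fst_Kset _ a b] \<open>a \<noteq> b\<close> by blast
  then have "v1 \<noteq> v2" by (simp add: a_eq b_eq)
  obtain \<xi> :: "real^2" where "\<xi> \<noteq> 0" and \<xi>: "(v2 - v1) \<bullet> \<xi> = 0"
    using orthogonal_to_vector_exists[of "v2 - v1"] by (auto simp: orthogonal_def)
  \<comment> \<open>On K, \<open>(\<sigma> + e Id) \<xi> = (v \<bullet> \<xi>) v\<close>; as \<open>\<xi> \<bottom> v2 - v1\<close>, both points share \<open>v \<bullet> \<xi> = -c\<close>.\<close>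
  define c where "c = - (v1 \<bullet> \<xi>)"
  have v2_\<xi>: "v2 \<bullet> \<xi> = - c"
    using \<xi> by (simp add: c_def inner_diff_left)
  have "b - a \<in> Zset"
    using a b Kset_subset_Zset by (blast intro: subspace_diff[OF subspace_Zset])
  moreover have "(v2 - v1, e2 - e1) \<noteq> 0"
    using \<open>v1 \<noteq> v2\<close> by (simp add: zero_prod_def)
  moreover have "((\<sigma>2 - \<sigma>1) + (e2 - e1) *\<^sub>R mat 1) *v \<xi> + c *\<^sub>R (v2 - v1) = 0"
  proof -
    have "(\<sigma>2 - \<sigma>1) + (e2 - e1) *\<^sub>R mat 1 = outer v2 v2 - outer v1 v1"
      using \<sigma>1 \<sigma>2 by (simp add: algebra_simps)
    then show ?thesis
      by (simp add: matrix_vector_mult_diff_rdistrib outer_mult_vec v2_\<xi>)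
         (simp add: c_def algebra_simps)
  qed
  moreover have "(m2 - m1) \<bullet> \<xi> + c * (e2 - e1) = 0"
    by (simp add: m1 m2 inner_diff_left v2_\<xi> c_def algebra_simps)
  ultimately show ?thesis
    using \<xi> \<open>\<xi> \<noteq> 0\<close> unfolding wave_cone_def a_eq b_eq
    by (auto simp: zero_prod_def intro!: exI[of _ \<xi>] exI[of _ c])
qed

lemma wave_cone_segment_in_convex_hull_Kset:
  assumes K': "K' \<subseteq> Kset p" and hull_K': "affine hull K' = Zset"
    and z: "z \<in> rel_interior (convex hull K')"
  obtains zb where "zb \<in> wave_cone"
    "z - 2 *\<^sub>R zb \<in> convex hull K'" "z + 2 *\<^sub>R zb \<in> convex hull K'"
proof -
  have "\<not> K' \<subseteq> {b}" for b
    using hull_mono[of K' "{b}" affine] hull_K' Zset_not_subset_singleton[of b] by auto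
  then obtain b c where b: "b \<in> K'" and c: "c \<in> K'" and "b \<noteq> c"
    by (metis insertI1 subsetI subset_singletonD)
  obtain \<epsilon> where "\<epsilon> > 0" and small: "\<And>s. \<bar>s\<bar> \<le> \<epsilon> \<Longrightarrow> z + s *\<^sub>R (c - b) \<in> convex hull K'"
    using rel_interior_segment_in_direction[OF z] b c hull_subset[of K' convex] by blast
  define zb where "zb = (\<epsilon> / 2) *\<^sub>R (c - b)"
  have two_zb: "2 *\<^sub>R zb = \<epsilon> *\<^sub>R (c - b)"
    by (simp add: zb_def)
  show ?thesis
  proof (rule that)
    show "zb \<in> wave_cone"
      unfolding zb_def using Kset_diff_in_wave_cone[of b p c] K' b c \<open>b \<noteq> c\<close> \<open>\<epsilon> > 0\<close>
      by (intro wave_cone_scaleR) auto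
    show "z - 2 *\<^sub>R zb \<in> convex hull K'"
      using small[of "- \<epsilon>"] \<open>\<epsilon> > 0\<close> by (simp add: two_zb)
    show "z + 2 *\<^sub>R zb \<in> convex hull K'"
      using small[of \<epsilon>] \<open>\<epsilon> > 0\<close> by (simp add: two_zb)
  qed
qed

lemma long_wave_cone_segment_in_convex_hull_Kset:
  assumes K': "K' \<subseteq> Kset p" and hull_K': "affine hull K' = Zset"
    and z: "z \<in> rel_interior (convex hull K')"
  obtains zb where "zb \<in> wave_cone"
    "z - 2 *\<^sub>R zb \<in> convex hull K'" "z + 2 *\<^sub>R zb \<in> convex hull K'"
    "infdist z K' \<le> 2 * real (dim Zset) * norm zb"
proof -
  obtain a j t where a: "a \<in> K'" and j: "j \<in> K'" and "0 \<le> t"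
    and segment: "z - t *\<^sub>R (j - a) \<in> convex hull K'" "z + t *\<^sub>R (j - a) \<in> convex hull K'"
    and dist: "norm (z - a) \<le> of_int (aff_dim K') * (t * norm (j - a))"
    using convex_hull_segment_from_heaviest_pair z rel_interior_subset by blast
  have "aff_dim K' = int (dim Zset)"
    using aff_dim_affine_hull[of K'] aff_dim_subspace[OF subspace_Zset] by (simp add: hull_K')
  then have infdist: "infdist z K' \<le> real (dim Zset) * (t * norm (j - a))"
    using infdist_le[OF a, of z] dist by (simp add: dist_norm)
  show ?thesis
  proof (cases "t * norm (j - a) = 0")
    case True
    have "infdist z K' \<le> 0"
      using infdist[unfolded True] by simp
    moreover obtain zb where "zb \<in> wave_cone"
      "z - 2 *\<^sub>R zb \<in> convex hull K'" "z + 2 *\<^sub>R zb \<in> convex hull K'"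
      using wave_cone_segment_in_convex_hull_Kset[OF K' hull_K' z] by blast
    moreover have "0 \<le> 2 * real (dim Zset) * norm zb"
      by simp
    ultimately show ?thesis
      using that by (meson order_trans)
  next
    case False
    then have "a \<noteq> j" "t \<noteq> 0" by auto
    define zb where "zb = (t / 2) *\<^sub>R (j - a)"
    have two_zb: "2 *\<^sub>R zb = t *\<^sub>R (j - a)"
      by (simp add: zb_def)
    show ?thesis
    proof (rule that)
      show "zb \<in> wave_cone"
        unfolding zb_def using Kset_diff_in_wave_cone[of a p j] K' a j \<open>a \<noteq> j\<close> \<open>t \<noteq> 0\<close>
        by (intro wave_cone_scaleR) auto
      show "z - 2 *\<^sub>R zb \<in> convex hull K'" "z + 2 *\<^sub>R zb \<in> convex hull K'"
        using segment by (simp_all add: two_zb)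
      note infdist
      also have "real (dim Zset) * (t * norm (j - a)) = 2 * real (dim Zset) * norm zb"
        using \<open>0 \<le> t\<close> by (simp add: zb_def)
      finally show "infdist z K' \<le> 2 * real (dim Zset) * norm zb" .
    qed
  qed
qed

theorem corollary2p4:
  fixes p :: real and K' :: "Zamb set" and z :: Zamb
  assumes "K' \<subseteq> Kset p" and "compact K'"
    and "z \<in> (top_of_set Zset) interior_of (convex hull K')"
  shows "\<exists>zb \<in> wave_cone.
           closed_segment (z - zb) (z + zb) \<subseteq> (top_of_set Zset) interior_of (convex hull K') \<and>
           norm zb \<ge> infdist z K' / (2 * real (dim Zset))"
proof -
  have affine_Zset: "affine Zset"
    by (rule subspace_imp_affine[OF subspace_Zset])
  have hull_subset_Zset: "convex hull K' \<subseteq> Zset"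
    using assms(1) Kset_subset_Zset subspace_imp_convex[OF subspace_Zset]
    by (intro hull_minimal) auto
  have nonempty: "(top_of_set Zset) interior_of (convex hull K') \<noteq> {}"
    using assms(3) by blast
  have hull_K': "affine hull K' = Zset"
    using affine_hull_eq_if_interior_of_nonempty[OF affine_Zset hull_subset_Zset nonempty] by simp
  have interior_eq: "(top_of_set Zset) interior_of (convex hull K') = rel_interior (convex hull K')"
    by (rule interior_of_eq_rel_interior[OF affine_Zset hull_subset_Zset nonempty])
  with assms(3) have z: "z \<in> rel_interior (convex hull K')"
    by simp
  obtain zb where "zb \<in> wave_cone"
    and "z - 2 *\<^sub>R zb \<in> convex hull K'" "z + 2 *\<^sub>R zb \<in> convex hull K'"
    and dist: "infdist z K' \<le> 2 * real (dim Zset) * norm zb"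
    by (rule long_wave_cone_segment_in_convex_hull_Kset[OF assms(1) hull_K' z])
  then have "closed_segment (z - zb) (z + zb) \<subseteq> rel_interior (convex hull K')"
    by (intro closed_segment_subset_rel_interior[OF convex_convex_hull z])
  moreover have "infdist z K' / (2 * real (dim Zset)) \<le> norm zb"
    using dist dim_Zset_pos by (simp add: pos_divide_le_eq mult.commute)
  ultimately show ?thesis
    using \<open>zb \<in> wave_cone\<close> interior_eq by auto
qed

end
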